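(* Let the functions satisfy the $M=2$ system and the boundary conditions (B) (see context), assume $\eta_0'(s)\neq0$ and $y_2(s)\ne0$ for $s>0$, and define $G:=x_0/y_2$. Then $$\Big(3s\frac{G'}{G}+2e_1\Big)^2-4e_1^2=12\Big(\eta_0-e_2-3s\eta_0'-s\frac{\eta_0''}{\eta_0'}\Big)-12s^2\Big(\frac{\eta_0'''}{\eta_0'}-\frac34\Big(\frac{\eta_0''}{\eta_0'}\Big)^2\Big).$$ If moreover, as $s\to0^+$, $x_0(s)\sim -\dfrac{i s^{-\nu_0}}{\Gamma(\nu_1-\nu_0+1)\Gamma(\nu_2-\nu_0+1)}$ and $y_2(s)\sim \dfrac{i\Gamma(\nu_2-\nu_1)s^{\nu_1}}{\Gamma(\nu_1-\nu_0+1)}+\dfrac{i\Gamma(\nu_1-\nu_2)s^{\nu_2}}{\Gamma(\nu_2-\nu_0+1)}$, then $$G^{-1}\sim-\Gamma(\nu_2-\nu_1)\Gamma(\nu_2-\nu_0+1)s^{\nu_1+\nu_0}-\Gamma(\nu_1-\nu_2)\Gamma(\nu_1-\nu_0+1)s^{\nu_2+\nu_0}\quad(s\to0^+).$$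
   Context: Fix complex parameters $\nu_0,\nu_1,\nu_2$ with $\nu_2-\nu_1\notin\mathbb Z$, and let $e_1=\nu_0+\nu_1+\nu_2$, $e_2=\nu_0\nu_1+\nu_0\nu_2+\nu_1\nu_2$, $e_3=\nu_0\nu_1\nu_2$. The $M=2$ system is the following system for smooth complex-valued functions $x_0,x_1,x_2,y_0,y_1,y_2,\xi_0,\xi_1,\xi_2,\eta_0,\eta_1,\eta_2$ of $s\in(0,\infty)$, with $'=d/ds$: $sx_0'=-\eta_0x_0-x_1$, $sx_1'=-\eta_1x_0-x_2$, $sx_2'=-\eta_2x_0-sx_0+\xi_0x_0+\xi_1x_1+\xi_2x_2$, $sy_2'=-\xi_2y_2+y_1$, $sy_1'=-\xi_1y_2+y_0$, $sy_0'=-\xi_0y_2+sy_2+\eta_0y_0+\eta_1y_1+\eta_2y_2$, $\xi_0'=-x_0y_0$, $\xi_1'=-x_0y_1$, $\xi_2'=-x_0y_2$, $\eta_0'=-x_0y_2$, $\eta_1'=-x_1y_2$, $\eta_2'=-x_2y_2$. Boundary conditions (B): as $s\to0^+$, $\eta_0,\eta_1,\eta_2\to0$, $\xi_0\to-e_3$, $\xi_1\to e_2$, $\xi_2\to-e_1$, and $x_j(s)y_k(s)\to0$, $s\,x_j(s)y_k(s)\to0$ for all $j,k\in\{0,1,2\}$. *)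

theory Defs
  imports "HOL-Analysis.Analysis" "HOL-Library.Landau_Symbols"
begin

definition D :: "(real \<Rightarrow> complex) \<Rightarrow> real \<Rightarrow> complex" where
  "D f = (\<lambda>s. vector_derivative f (at s))"

definition smooth_pos :: "(real \<Rightarrow> complex) \<Rightarrow> bool" where
  "smooth_pos f \<longleftrightarrow> (\<forall>n. \<forall>s>0. ((D ^^ n) f) differentiable (at s))"

end

theory Submission
  imports Defs
begin

text \<open>Three first integrals of the system, \<open>\<xi>2 - \<eta>0\<close>,
  \<open>\<xi>1 - \<eta>1 + s x0 y2 + \<eta>0 - \<eta>0\<^sup>2 + e1 \<eta>0\<close> and the pairing \<open>x0 y0 + x1 y1 + x2 y2\<close>,
  are constant and are identified by the boundary conditions (B).
  With \<open>u = x1/x0\<close> and \<open>v = y1/y2\<close> one finds \<open>s G'/G = -e1 - u - v\<close> and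
  \<open>w := s \<eta>0''/\<eta>0' = e1 - 2\<eta>0 - u + v\<close>; differentiating \<open>w\<close> once more and eliminating
  \<open>y0\<close> through the pairing turns both sides of the identity into
  \<open>9(u + v)\<^sup>2 + 6 e1 (u + v) - 3 e1\<^sup>2\<close>.
  The asymptotic statement is the quotient of the two given asymptotics.\<close>

lemma has_vector_derivative_D_iterate:
  "smooth_pos f \<Longrightarrow> 0 < s \<Longrightarrow> ((D ^^ n) f has_vector_derivative (D ^^ Suc n) f s) (at s)"
  unfolding smooth_pos_def by (simp add: D_def vector_derivative_works)

lemma smooth_pos_differentiable: "smooth_pos f \<Longrightarrow> 0 < s \<Longrightarrow> f differentiable (at s)"
  unfolding smooth_pos_def by (metis funpow_0)

lemma has_vector_derivative_D:
  "smooth_pos f \<Longrightarrow> 0 < s \<Longrightarrow> (f has_vector_derivative D f s) (at s)"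
  using has_vector_derivative_D_iterate[of f s 0] by simp

lemma D_eqI: "(f has_vector_derivative f') (at s) \<Longrightarrow> D f s = f'"
  by (simp add: D_def vector_derivative_at)

lemma D_cong_pos:
  assumes "\<And>t. 0 < t \<Longrightarrow> f t = g t" and "0 < s"
  shows "D f s = D g s"
proof -
  have "\<forall>\<^sub>F t in nhds s. t \<in> UNIV \<longrightarrow> f t = g t"
    using eventually_nhds_in_open[of "{0<..}" s] assms by (auto elim: eventually_mono)
  then show ?thesis
    unfolding D_def by (intro vector_derivative_cong_eq) auto
qed

lemma has_vector_derivative_quotient:
  fixes f g :: "real \<Rightarrow> 'a::real_normed_field"
  assumes "(f has_vector_derivative f') (at s)" "(g has_vector_derivative g') (at s)" "g s \<noteq> 0"
    and "h = (f' * g s - f s * g') / (g s)\<^sup>2"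
  shows "((\<lambda>t. f t / g t) has_vector_derivative h) (at s)"
proof -
  have "((inverse \<circ> g) has_vector_derivative g' * - (inverse (g s))\<^sup>2) (at s)"
    using field_vector_diff_chain_at[OF assms(2) DERIV_inverse[OF assms(3)]]
    by (simp add: power2_eq_square)
  from has_vector_derivative_mult[OF assms(1) this]
  show ?thesis
    using assms(3,4) by (simp add: divide_inverse o_def) (simp add: field_simps power2_eq_square)
qed

lemma constant_on_pos_if_zero_derivative:
  fixes f :: "real \<Rightarrow> 'a::real_normed_vector"
  assumes "\<And>t. 0 < t \<Longrightarrow> (f has_vector_derivative 0) (at t)"
    and "(f \<longlongrightarrow> L) (at_right 0)" and "0 < t"
  shows "f t = L"
proof -
  obtain c where c: "\<And>t. t \<in> {0<..} \<Longrightarrow> f t = c"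
    using has_vector_derivative_zero_constant[of "{0::real<..}" f] assms(1)
    by (metis convex_real_interval(3) greaterThan_iff has_vector_derivative_at_within)
  have "(f \<longlongrightarrow> c) (at_right 0)"
    by (rule tendsto_eventually) (use eventually_at_right_less[of 0] c in \<open>auto elim: eventually_mono\<close>)
  then have "c = L"
    using assms(2) tendsto_unique trivial_limit_at_right_real by blast
  with c assms(3) show ?thesis by simp
qed

locale m2_system =
  fixes x0 x1 x2 y0 y1 y2 \<xi>0 \<xi>1 \<xi>2 \<eta>0 \<eta>1 \<eta>2 :: "real \<Rightarrow> complex"
  assumes smooth: "smooth_pos x0" "smooth_pos x1" "smooth_pos x2"
      "smooth_pos y0" "smooth_pos y1" "smooth_pos y2"
      "smooth_pos \<xi>0" "smooth_pos \<xi>1" "smooth_pos \<xi>2"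
      "smooth_pos \<eta>0" "smooth_pos \<eta>1" "smooth_pos \<eta>2"
    and x0_ode: "\<And>s. 0 < s \<Longrightarrow> of_real s * D x0 s = - \<eta>0 s * x0 s - x1 s"
    and x1_ode: "\<And>s. 0 < s \<Longrightarrow> of_real s * D x1 s = - \<eta>1 s * x0 s - x2 s"
    and x2_ode: "\<And>s. 0 < s \<Longrightarrow> of_real s * D x2 s =
        - \<eta>2 s * x0 s - of_real s * x0 s + \<xi>0 s * x0 s + \<xi>1 s * x1 s + \<xi>2 s * x2 s"
    and y2_ode: "\<And>s. 0 < s \<Longrightarrow> of_real s * D y2 s = - \<xi>2 s * y2 s + y1 s"
    and y1_ode: "\<And>s. 0 < s \<Longrightarrow> of_real s * D y1 s = - \<xi>1 s * y2 s + y0 s"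
    and y0_ode: "\<And>s. 0 < s \<Longrightarrow> of_real s * D y0 s =
        - \<xi>0 s * y2 s + of_real s * y2 s + \<eta>0 s * y0 s + \<eta>1 s * y1 s + \<eta>2 s * y2 s"
    and \<xi>0_ode: "\<And>s. 0 < s \<Longrightarrow> D \<xi>0 s = - x0 s * y0 s"
    and \<xi>1_ode: "\<And>s. 0 < s \<Longrightarrow> D \<xi>1 s = - x0 s * y1 s"
    and \<xi>2_ode: "\<And>s. 0 < s \<Longrightarrow> D \<xi>2 s = - x0 s * y2 s"
    and \<eta>0_ode: "\<And>s. 0 < s \<Longrightarrow> D \<eta>0 s = - x0 s * y2 s"
    and \<eta>1_ode: "\<And>s. 0 < s \<Longrightarrow> D \<eta>1 s = - x1 s * y2 s"
    and \<eta>2_ode: "\<And>s. 0 < s \<Longrightarrow> D \<eta>2 s = - x2 s * y2 s"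
begin

lemma has_vector_derivative_ode:
  assumes "0 < s"
  shows "(x0 has_vector_derivative (- \<eta>0 s * x0 s - x1 s) / of_real s) (at s)"
    and "(x1 has_vector_derivative (- \<eta>1 s * x0 s - x2 s) / of_real s) (at s)"
    and "(x2 has_vector_derivative (- \<eta>2 s * x0 s - of_real s * x0 s
           + \<xi>0 s * x0 s + \<xi>1 s * x1 s + \<xi>2 s * x2 s) / of_real s) (at s)"
    and "(y2 has_vector_derivative (- \<xi>2 s * y2 s + y1 s) / of_real s) (at s)"
    and "(y1 has_vector_derivative (- \<xi>1 s * y2 s + y0 s) / of_real s) (at s)"
    and "(y0 has_vector_derivative (- \<xi>0 s * y2 s + of_real s * y2 s
           + \<eta>0 s * y0 s + \<eta>1 s * y1 s + \<eta>2 s * y2 s) / of_real s) (at s)"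
    and "(\<xi>1 has_vector_derivative - x0 s * y1 s) (at s)"
    and "(\<xi>2 has_vector_derivative - x0 s * y2 s) (at s)"
    and "(\<eta>0 has_vector_derivative - x0 s * y2 s) (at s)"
    and "(\<eta>1 has_vector_derivative - x1 s * y2 s) (at s)"
proof -
  have scaled: "(f has_vector_derivative r / of_real s) (at s)"
    if "smooth_pos f" "of_real s * D f s = r" for f r
    using has_vector_derivative_D[OF that(1) assms] that(2) assms
    by (metis nonzero_mult_div_cancel_left of_real_eq_0_iff less_irrefl)
  have plain: "(f has_vector_derivative r) (at s)" if "smooth_pos f" "D f s = r" for f r
    using has_vector_derivative_D[OF that(1) assms] that(2) by simp
  show "(x0 has_vector_derivative (- \<eta>0 s * x0 s - x1 s) / of_real s) (at s)"
    by (rule scaled[OF smooth(1) x0_ode[OF assms]])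
  show "(x1 has_vector_derivative (- \<eta>1 s * x0 s - x2 s) / of_real s) (at s)"
    by (rule scaled[OF smooth(2) x1_ode[OF assms]])
  show "(x2 has_vector_derivative (- \<eta>2 s * x0 s - of_real s * x0 s
           + \<xi>0 s * x0 s + \<xi>1 s * x1 s + \<xi>2 s * x2 s) / of_real s) (at s)"
    by (rule scaled[OF smooth(3) x2_ode[OF assms]])
  show "(y2 has_vector_derivative (- \<xi>2 s * y2 s + y1 s) / of_real s) (at s)"
    by (rule scaled[OF smooth(6) y2_ode[OF assms]])
  show "(y1 has_vector_derivative (- \<xi>1 s * y2 s + y0 s) / of_real s) (at s)"
    by (rule scaled[OF smooth(5) y1_ode[OF assms]])
  show "(y0 has_vector_derivative (- \<xi>0 s * y2 s + of_real s * y2 s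
           + \<eta>0 s * y0 s + \<eta>1 s * y1 s + \<eta>2 s * y2 s) / of_real s) (at s)"
    by (rule scaled[OF smooth(4) y0_ode[OF assms]])
  show "(\<xi>1 has_vector_derivative - x0 s * y1 s) (at s)"
    by (rule plain[OF smooth(8) \<xi>1_ode[OF assms]])
  show "(\<xi>2 has_vector_derivative - x0 s * y2 s) (at s)"
    by (rule plain[OF smooth(9) \<xi>2_ode[OF assms]])
  show "(\<eta>0 has_vector_derivative - x0 s * y2 s) (at s)"
    by (rule plain[OF smooth(10) \<eta>0_ode[OF assms]])
  show "(\<eta>1 has_vector_derivative - x1 s * y2 s) (at s)"
    by (rule plain[OF smooth(11) \<eta>1_ode[OF assms]])
qed

lemma \<xi>2_first_integral:
  assumes "(\<eta>0 \<longlongrightarrow> 0) (at_right 0)" "(\<xi>2 \<longlongrightarrow> c) (at_right 0)" "0 < t"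
  shows "\<xi>2 t = \<eta>0 t + c"
proof -
  have "(\<lambda>t. \<xi>2 t - \<eta>0 t) t = c"
  proof (rule constant_on_pos_if_zero_derivative[OF _ _ \<open>0 < t\<close>])
    show "((\<lambda>t. \<xi>2 t - \<eta>0 t) has_vector_derivative 0) (at t)" if "0 < t" for t
      using has_vector_derivative_diff[OF has_vector_derivative_ode(8,9)[OF that]] by simp
    show "((\<lambda>t. \<xi>2 t - \<eta>0 t) \<longlongrightarrow> c) (at_right 0)"
      using tendsto_diff[OF assms(2,1)] by simp
  qed
  then show ?thesis by (simp add: algebra_simps)
qed

lemma bilinear_first_integral:
  assumes "((\<lambda>s. x0 s * y0 s) \<longlongrightarrow> 0) (at_right 0)" "((\<lambda>s. x1 s * y1 s) \<longlongrightarrow> 0) (at_right 0)"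
    "((\<lambda>s. x2 s * y2 s) \<longlongrightarrow> 0) (at_right 0)" "0 < t"
  shows "x0 t * y0 t + x1 t * y1 t + x2 t * y2 t = 0"
proof (rule constant_on_pos_if_zero_derivative[OF _ _ \<open>0 < t\<close>])
  show "((\<lambda>t. x0 t * y0 t + x1 t * y1 t + x2 t * y2 t) has_vector_derivative 0) (at t)"
    if "0 < t" for t
    using that
    by (auto intro!: derivative_eq_intros has_vector_derivative_ode[OF that] simp: field_simps)
  show "((\<lambda>t. x0 t * y0 t + x1 t * y1 t + x2 t * y2 t) \<longlongrightarrow> 0) (at_right 0)"
    using tendsto_add[OF tendsto_add[OF assms(1,2)] assms(3)] by simp
qed

lemma \<xi>1_first_integral:
  assumes "(\<eta>0 \<longlongrightarrow> 0) (at_right 0)" "(\<eta>1 \<longlongrightarrow> 0) (at_right 0)"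
    "(\<xi>1 \<longlongrightarrow> e2) (at_right 0)" "(\<xi>2 \<longlongrightarrow> - e1) (at_right 0)"
    "((\<lambda>s. of_real s * x0 s * y2 s) \<longlongrightarrow> 0) (at_right 0)" "0 < t"
  shows "\<xi>1 t = \<eta>1 t - of_real t * x0 t * y2 t - \<eta>0 t + (\<eta>0 t)\<^sup>2 - e1 * \<eta>0 t + e2"
proof -
  have "(\<lambda>t. \<xi>1 t - \<eta>1 t + of_real t * x0 t * y2 t + \<eta>0 t - (\<eta>0 t)\<^sup>2 + e1 * \<eta>0 t) t = e2"
  proof (rule constant_on_pos_if_zero_derivative[OF _ _ \<open>0 < t\<close>])
    show "((\<lambda>t. \<xi>1 t - \<eta>1 t + of_real t * x0 t * y2 t + \<eta>0 t - (\<eta>0 t)\<^sup>2 + e1 * \<eta>0 t)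
        has_vector_derivative 0) (at t)" if "0 < t" for t
      using that
      by (auto intro!: derivative_eq_intros has_vector_derivative_ode[OF that]
          simp: \<xi>2_first_integral[OF assms(1,4) that] field_simps power2_eq_square)
    have "((\<lambda>t. \<xi>1 t - \<eta>1 t + of_real t * x0 t * y2 t + \<eta>0 t - (\<eta>0 t)\<^sup>2 + e1 * \<eta>0 t)
        \<longlongrightarrow> e2 - 0 + 0 + 0 - 0\<^sup>2 + e1 * 0) (at_right 0)"
      by (intro tendsto_intros assms)
    then show "((\<lambda>t. \<xi>1 t - \<eta>1 t + of_real t * x0 t * y2 t + \<eta>0 t - (\<eta>0 t)\<^sup>2 + e1 * \<eta>0 t)
        \<longlongrightarrow> e2) (at_right 0)"
      by simp
  qed
  then show ?thesis by (simp add: algebra_simps)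
qed

end

locale m2_solution = m2_system +
  fixes e1 e2 :: complex
  assumes \<eta>0_limit: "(\<eta>0 \<longlongrightarrow> 0) (at_right 0)" and \<eta>1_limit: "(\<eta>1 \<longlongrightarrow> 0) (at_right 0)"
    and \<xi>1_limit: "(\<xi>1 \<longlongrightarrow> e2) (at_right 0)" and \<xi>2_limit: "(\<xi>2 \<longlongrightarrow> - e1) (at_right 0)"
    and x0_y0_limit: "((\<lambda>s. x0 s * y0 s) \<longlongrightarrow> 0) (at_right 0)"
    and x1_y1_limit: "((\<lambda>s. x1 s * y1 s) \<longlongrightarrow> 0) (at_right 0)"
    and x2_y2_limit: "((\<lambda>s. x2 s * y2 s) \<longlongrightarrow> 0) (at_right 0)"
    and s_x0_y2_limit: "((\<lambda>s. of_real s * x0 s * y2 s) \<longlongrightarrow> 0) (at_right 0)"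
    and D_\<eta>0_nonzero: "\<And>s. 0 < s \<Longrightarrow> D \<eta>0 s \<noteq> 0"
    and y2_nonzero: "\<And>s. 0 < s \<Longrightarrow> y2 s \<noteq> 0"
begin

lemma \<xi>2_eq: "0 < t \<Longrightarrow> \<xi>2 t = \<eta>0 t - e1"
  using \<xi>2_first_integral[OF \<eta>0_limit \<xi>2_limit] by simp

lemma \<xi>1_eq:
  "0 < t \<Longrightarrow> \<xi>1 t = \<eta>1 t - of_real t * x0 t * y2 t - \<eta>0 t + (\<eta>0 t)\<^sup>2 - e1 * \<eta>0 t + e2"
  by (rule \<xi>1_first_integral[OF \<eta>0_limit \<eta>1_limit \<xi>1_limit \<xi>2_limit s_x0_y2_limit])

lemma x0_nonzero: "0 < t \<Longrightarrow> x0 t \<noteq> 0"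
  using D_\<eta>0_nonzero \<eta>0_ode by fastforce

lemma y0_eq: "0 < t \<Longrightarrow> y0 t = - (x1 t * y1 t + x2 t * y2 t) / x0 t"
  using bilinear_first_integral[OF x0_y0_limit x1_y1_limit x2_y2_limit] x0_nonzero
  by (simp add: field_simps eq_neg_iff_add_eq_0 algebra_simps)

definition u :: "real \<Rightarrow> complex" where "u t = x1 t / x0 t"
definition v :: "real \<Rightarrow> complex" where "v t = y1 t / y2 t"
definition w :: "real \<Rightarrow> complex" where "w t = e1 - 2 * \<eta>0 t - u t + v t"

lemma scaled_dlog_x0_over_y2:
  assumes "0 < s"
  shows "of_real s * D (\<lambda>t. x0 t / y2 t) s / (x0 s / y2 s) = - e1 - u s - v s"
proof -
  have "D (\<lambda>t. x0 t / y2 t) s = ((- \<eta>0 s * x0 s - x1 s) / of_real s * y2 s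
      - x0 s * ((- \<xi>2 s * y2 s + y1 s) / of_real s)) / (y2 s)\<^sup>2"
    by (intro D_eqI has_vector_derivative_quotient[OF has_vector_derivative_ode(1,4)[OF assms]]
        y2_nonzero[OF assms] refl)
  then show ?thesis
    using assms x0_nonzero[OF assms] y2_nonzero[OF assms]
    by (simp add: \<xi>2_eq u_def v_def) (simp add: field_simps power2_eq_square)
qed

lemma D2_\<eta>0:
  assumes "0 < s"
  shows "(D ^^ 2) \<eta>0 s = D \<eta>0 s * w s / of_real s"
proof -
  have "(D ^^ 2) \<eta>0 s = D (\<lambda>t. - x0 t * y2 t) s"
    using D_cong_pos[OF \<eta>0_ode assms] by (simp add: numeral_2_eq_2)
  also have "\<dots> = - (x0 s * ((- \<xi>2 s * y2 s + y1 s) / of_real s)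
      + (- \<eta>0 s * x0 s - x1 s) / of_real s * y2 s)"
    using assms by (auto intro!: D_eqI derivative_eq_intros has_vector_derivative_ode)
  also have "\<dots> = D \<eta>0 s * w s / of_real s"
    using assms x0_nonzero[OF assms] y2_nonzero[OF assms]
    by (simp add: \<eta>0_ode \<xi>2_eq w_def u_def v_def field_simps)
  finally show ?thesis .
qed

lemma scaled_D_w:
  assumes "0 < s"
  shows "of_real s * D w s = - 3 * of_real s * D \<eta>0 s + \<eta>0 s - (\<eta>0 s)\<^sup>2 + e1 * \<eta>0 s - e2
    + (v s - u s) * \<eta>0 s - e1 * v s - ((u s)\<^sup>2 + u s * v s + (v s)\<^sup>2)"
proof -
  have "D w s = - 2 * (- x0 s * y2 s)
      - (((- \<eta>1 s * x0 s - x2 s) / of_real s * x0 s - x1 s * ((- \<eta>0 s * x0 s - x1 s) / of_real s)) / (x0 s)\<^sup>2)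
      + (((- \<xi>1 s * y2 s + y0 s) / of_real s * y2 s - y1 s * ((- \<xi>2 s * y2 s + y1 s) / of_real s)) / (y2 s)\<^sup>2)"
    unfolding w_def[abs_def] u_def v_def using assms
    by (auto intro!: D_eqI derivative_eq_intros has_vector_derivative_quotient has_vector_derivative_ode
        x0_nonzero y2_nonzero)
  then show ?thesis
    using assms x0_nonzero[OF assms] y2_nonzero[OF assms]
    by (simp add: \<eta>0_ode \<xi>2_eq \<xi>1_eq y0_eq u_def v_def) (simp add: field_simps power2_eq_square)
qed

lemma has_vector_derivative_w: "0 < s \<Longrightarrow> (w has_vector_derivative D w s) (at s)"
  unfolding D_def vector_derivative_works[symmetric] w_def[abs_def] u_def v_def
  by (intro derivative_intros smooth_pos_differentiable smooth x0_nonzero y2_nonzero)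

lemma D3_\<eta>0:
  assumes "0 < s"
  shows "(D ^^ 3) \<eta>0 s = D \<eta>0 s * (of_real s * D w s + (w s)\<^sup>2 - w s) / (of_real s)\<^sup>2"
proof -
  have "(D ^^ 3) \<eta>0 s = D (\<lambda>t. D \<eta>0 t * w t / of_real t) s"
    using D_cong_pos[of "(D ^^ 2) \<eta>0" "\<lambda>t. D \<eta>0 t * w t / of_real t", OF D2_\<eta>0 assms]
    by (simp add: numeral_3_eq_3 numeral_2_eq_2)
  also have "\<dots> = ((D ^^ 2) \<eta>0 s * w s + D \<eta>0 s * D w s) / of_real s - D \<eta>0 s * w s / (of_real s)\<^sup>2"
    using assms
    by (intro D_eqI)
      (auto intro!: derivative_eq_intros has_vector_derivative_quotient has_vector_derivative_w
        has_vector_derivative_D_iterate[OF smooth(10), of _ 1, simplified]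
        simp: numeral_2_eq_2 field_simps)
  also have "\<dots> = D \<eta>0 s * (of_real s * D w s + (w s)\<^sup>2 - w s) / (of_real s)\<^sup>2"
    using assms by (simp add: D2_\<eta>0 field_simps power2_eq_square)
  finally show ?thesis .
qed

lemma dlog_x0_over_y2_identity:
  assumes "0 < s"
  shows "(3 * of_real s * D (\<lambda>t. x0 t / y2 t) s / (x0 s / y2 s) + 2 * e1)\<^sup>2 - 4 * e1\<^sup>2
    = 12 * (\<eta>0 s - e2 - 3 * of_real s * D \<eta>0 s - of_real s * (D ^^ 2) \<eta>0 s / D \<eta>0 s)
      - 12 * (of_real s)\<^sup>2 * ((D ^^ 3) \<eta>0 s / D \<eta>0 s - 3 / 4 * ((D ^^ 2) \<eta>0 s / D \<eta>0 s)\<^sup>2)"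
proof -
  have s: "(of_real s :: complex) \<noteq> 0" and \<eta>': "D \<eta>0 s \<noteq> 0"
    using assms D_\<eta>0_nonzero by auto
  have G: "3 * of_real s * D (\<lambda>t. x0 t / y2 t) s / (x0 s / y2 s) = - 3 * (e1 + u s + v s)"
    using arg_cong[OF scaled_dlog_x0_over_y2[OF assms], of "\<lambda>z. 3 * z"]
    by (simp add: mult.assoc)
  have D2: "(D ^^ 2) \<eta>0 s / D \<eta>0 s = w s / of_real s"
    using D2_\<eta>0[OF assms] s \<eta>' by simp
  have D3: "(D ^^ 3) \<eta>0 s / D \<eta>0 s = (of_real s * D w s + (w s)\<^sup>2 - w s) / (of_real s)\<^sup>2"
    using D3_\<eta>0[OF assms] \<eta>' by simp
  show ?thesis
    unfolding G unfolding times_divide_eq_right[symmetric] D2 D3 scaled_D_w[OF assms]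
    using s by (simp add: w_def field_simps power2_eq_square)
qed

end

lemma quotient_asymp_equiv:
  fixes x y :: "real \<Rightarrow> complex" and a b g1 g2 \<nu>0 \<nu>1 \<nu>2 :: complex
  assumes x: "x \<sim>[at_right 0] (\<lambda>s. - \<i> * of_real s powr (- \<nu>0) / (g1 * g2))"
    and y: "y \<sim>[at_right 0] (\<lambda>s. \<i> * a * of_real s powr \<nu>1 / g1 + \<i> * b * of_real s powr \<nu>2 / g2)"
    and x_nonzero: "\<forall>\<^sub>F s in at_right 0. x s \<noteq> 0"
  shows "(\<lambda>s. y s / x s) \<sim>[at_right 0]
    (\<lambda>s. - a * g2 * of_real s powr (\<nu>1 + \<nu>0) - b * g1 * of_real s powr (\<nu>2 + \<nu>0))"
proof -
  have "\<forall>\<^sub>F s in at_right (0::real). - \<i> * of_real s powr (- \<nu>0) / (g1 * g2) \<noteq> 0"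
    using asymp_equiv_eventually_zeros[OF x] x_nonzero by eventually_elim simp
  then have g: "g1 \<noteq> 0" "g2 \<noteq> 0"
    by (auto simp: trivial_limit_at_right_real dest: eventually_happens')
  show ?thesis
  proof (rule asymp_equiv_transfer[OF asymp_equiv_divide[OF y x]])
    show "\<forall>\<^sub>F s in at_right 0. (\<i> * a * of_real s powr \<nu>1 / g1 + \<i> * b * of_real s powr \<nu>2 / g2)
        / (- \<i> * of_real s powr (- \<nu>0) / (g1 * g2))
      = - a * g2 * of_real s powr (\<nu>1 + \<nu>0) - b * g1 * of_real s powr (\<nu>2 + \<nu>0)"
      using eventually_at_right_less[of 0]
      by eventually_elim (use g in \<open>simp add: powr_minus powr_add field_simps\<close>)
  qed simp
qed

theorem mainTheorem10:
  fixes \<nu>0 \<nu>1 \<nu>2 e1 e2 e3 :: complex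
    and x0 x1 x2 y0 y1 y2 \<xi>0 \<xi>1 \<xi>2 \<eta>0 \<eta>1 \<eta>2 G :: "real \<Rightarrow> complex"
  assumes nonint: "\<nu>2 - \<nu>1 \<notin> \<int>"
    and e1_def: "e1 = \<nu>0 + \<nu>1 + \<nu>2"
    and e2_def: "e2 = \<nu>0 * \<nu>1 + \<nu>0 * \<nu>2 + \<nu>1 * \<nu>2"
    and e3_def: "e3 = \<nu>0 * \<nu>1 * \<nu>2"
    and smooth: "smooth_pos x0" "smooth_pos x1" "smooth_pos x2"
                "smooth_pos y0" "smooth_pos y1" "smooth_pos y2"
                "smooth_pos \<xi>0" "smooth_pos \<xi>1" "smooth_pos \<xi>2"
                "smooth_pos \<eta>0" "smooth_pos \<eta>1" "smooth_pos \<eta>2"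
    and sys: "\<And>s. s > 0 \<Longrightarrow>
        of_real s * D x0 s = - \<eta>0 s * x0 s - x1 s \<and>
        of_real s * D x1 s = - \<eta>1 s * x0 s - x2 s \<and>
        of_real s * D x2 s = - \<eta>2 s * x0 s - of_real s * x0 s
                              + \<xi>0 s * x0 s + \<xi>1 s * x1 s + \<xi>2 s * x2 s \<and>
        of_real s * D y2 s = - \<xi>2 s * y2 s + y1 s \<and>
        of_real s * D y1 s = - \<xi>1 s * y2 s + y0 s \<and>
        of_real s * D y0 s = - \<xi>0 s * y2 s + of_real s * y2 s
                              + \<eta>0 s * y0 s + \<eta>1 s * y1 s + \<eta>2 s * y2 s \<and>
        D \<xi>0 s = - x0 s * y0 s \<and>
        D \<xi>1 s = - x0 s * y1 s \<and>
        D \<xi>2 s = - x0 s * y2 s \<and>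
        D \<eta>0 s = - x0 s * y2 s \<and>
        D \<eta>1 s = - x1 s * y2 s \<and>
        D \<eta>2 s = - x2 s * y2 s"
    and B_eta: "(\<eta>0 \<longlongrightarrow> 0) (at_right 0)" "(\<eta>1 \<longlongrightarrow> 0) (at_right 0)"
               "(\<eta>2 \<longlongrightarrow> 0) (at_right 0)"
    and B_xi: "(\<xi>0 \<longlongrightarrow> - e3) (at_right 0)" "(\<xi>1 \<longlongrightarrow> e2) (at_right 0)"
              "(\<xi>2 \<longlongrightarrow> - e1) (at_right 0)"
    and B_xy: "\<And>j k. j \<in> {0,1,2::nat} \<Longrightarrow> k \<in> {0,1,2::nat} \<Longrightarrow>
        ((\<lambda>s. ([x0, x1, x2] ! j) s * ([y0, y1, y2] ! k) s) \<longlongrightarrow> 0) (at_right 0) \<and>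
        ((\<lambda>s. of_real s * ([x0, x1, x2] ! j) s * ([y0, y1, y2] ! k) s) \<longlongrightarrow> 0) (at_right 0)"
    and eta0'_nz: "\<And>s. s > 0 \<Longrightarrow> D \<eta>0 s \<noteq> 0"
    and y2_nz: "\<And>s. s > 0 \<Longrightarrow> y2 s \<noteq> 0"
    and G_def: "G = (\<lambda>s. x0 s / y2 s)"
  shows "(\<forall>s>0.
      (3 * of_real s * D G s / G s + 2 * e1)\<^sup>2 - 4 * e1\<^sup>2
      = 12 * (\<eta>0 s - e2 - 3 * of_real s * D \<eta>0 s
              - of_real s * (D ^^ 2) \<eta>0 s / D \<eta>0 s)
        - 12 * (of_real s)\<^sup>2 * ((D ^^ 3) \<eta>0 s / D \<eta>0 s
              - 3 / 4 * ((D ^^ 2) \<eta>0 s / D \<eta>0 s)\<^sup>2))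
    \<and>
    ((x0 \<sim>[at_right 0] (\<lambda>s. - \<i> * of_real s powr (- \<nu>0)
                           / (Gamma (\<nu>1 - \<nu>0 + 1) * Gamma (\<nu>2 - \<nu>0 + 1))))
     \<and> (y2 \<sim>[at_right 0] (\<lambda>s. \<i> * Gamma (\<nu>2 - \<nu>1) * of_real s powr \<nu>1 / Gamma (\<nu>1 - \<nu>0 + 1)
                           + \<i> * Gamma (\<nu>1 - \<nu>2) * of_real s powr \<nu>2 / Gamma (\<nu>2 - \<nu>0 + 1)))
     \<longrightarrow> ((\<lambda>s. inverse (G s)) \<sim>[at_right 0]
            (\<lambda>s. - Gamma (\<nu>2 - \<nu>1) * Gamma (\<nu>2 - \<nu>0 + 1) * of_real s powr (\<nu>1 + \<nu>0)
                 - Gamma (\<nu>1 - \<nu>2) * Gamma (\<nu>1 - \<nu>0 + 1) * of_real s powr (\<nu>2 + \<nu>0))))"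
proof -
  interpret m2_solution x0 x1 x2 y0 y1 y2 \<xi>0 \<xi>1 \<xi>2 \<eta>0 \<eta>1 \<eta>2 e1 e2
    using smooth sys B_eta B_xi B_xy[of 0 0] B_xy[of 1 1] B_xy[of 2 2] B_xy[of 0 2] eta0'_nz y2_nz
    by unfold_locales auto
  have "(\<lambda>s. inverse (G s)) = (\<lambda>s. y2 s / x0 s)"
    by (simp add: G_def)
  moreover have "\<forall>\<^sub>F s in at_right 0. x0 s \<noteq> 0"
    using eventually_at_right_less[of 0] by eventually_elim (rule x0_nonzero)
  ultimately show ?thesis
    using dlog_x0_over_y2_identity quotient_asymp_equiv by (simp add: G_def)
qed

end
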